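(* Let $\mathbb{F}$ be a field of characteristic different from $2$, let $n\geq3$, and let $\mathcal{A}$ be a division $*$-algebra which is one of: $\mathbb{F}$, a binarion algebra $\mathcal{B}(\mathbb{F})$, or a quaternion algebra $\mathcal{Q}(\mathbb{F})$. Let $H_n(\mathcal{A})$ be the Jordan algebra of self-adjoint $n\times n$ matrices over $\mathcal{A}$. Then every 2-local 1-automorphism on $H_n(\mathcal{A})$ is an automorphism.
   Context: $\mathbb{F}$ carries the trivial involution. $\mathcal{B}(\mathbb{F})$ is the associative unital algebra with basis $\mathbf{1},i$, $i^2=\lambda\mathbf{1}$ ($\lambda\neq0$), involution $\overline{\alpha_0+\alpha_1i}=\alpha_0-\alpha_1i$. $\mathcal{Q}(\mathbb{F})$ is the associative unital algebra with basis $\mathbf{1},i,j,k$, $i^2=\lambda\mathbf{1}$, $j^2=\mu\mathbf{1}$, $ij=-ji=k$ ($\lambda,\mu\neq0$), involution negating the $i,j,k$ coordinates. $M_n(\mathcal{A})$ has involution $(a_{i,j})^*=(\overline{a_{j,i}})$, $H_n(\mathcal{A})=\{x:x^*=x\}$ with Jordan product $a\circ b=\frac12(ab+ba)$. A symmetry is $s\in H_n(\mathcal{A})$ with $s\circ s=1$ (identity matrix), and $U_s(x)=2s\circ(s\circ x)-x$. A 2-local 1-automorphism is a map $\Delta:H_n(\mathcal{A})\to H_n(\mathcal{A})$ (not assumed linear) such that for every $x,y$ there is a symmetry $s$ with $\Delta(x)=U_s(x)$, $\Delta(y)=U_s(y)$. *)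

theory Defs
  imports Main "HOL-Library.Product_Plus"
begin

text \<open>Generalized quaternion algebra over a field 'f with parameters lam (i^2) and mu (j^2).
  An element a0 + a1 i + a2 j + a3 k is represented by the tuple (a0, a1, a2, a3).
  Addition/zero/negation are componentwise (Product_Plus).
  The algebras F, B(F), Q(F) are realised as the subalgebras
  {(a,0,0,0)}, {(a,b,0,0)}, and everything, with the restricted multiplication
  and involution.\<close>

type_synonym 'f quat = "'f \<times> 'f \<times> 'f \<times> 'f"

definition qmul :: "'f::field \<Rightarrow> 'f \<Rightarrow> 'f quat \<Rightarrow> 'f quat \<Rightarrow> 'f quat" where
  "qmul lam mu x y = (case x of (a0, a1, a2, a3) \<Rightarrow> case y of (b0, b1, b2, b3) \<Rightarrow>
     (a0*b0 + lam*a1*b1 + mu*a2*b2 - lam*mu*a3*b3,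
      a0*b1 + a1*b0 - mu*a2*b3 + mu*a3*b2,
      a0*b2 + a2*b0 + lam*a1*b3 - lam*a3*b1,
      a0*b3 + a3*b0 + a1*b2 - a2*b1))"

definition qone :: "'f::field quat" where
  "qone = (1, 0, 0, 0)"

definition qscale :: "'f::field \<Rightarrow> 'f quat \<Rightarrow> 'f quat" where
  "qscale c x = (case x of (a0, a1, a2, a3) \<Rightarrow> (c*a0, c*a1, c*a2, c*a3))"

definition qconj :: "'f::field quat \<Rightarrow> 'f quat" where
  "qconj x = (case x of (a0, a1, a2, a3) \<Rightarrow> (a0, -a1, -a2, -a3))"

definition algF :: "'f::field quat set" where
  "algF = {(a, 0, 0, 0) | a. True}"

definition algB :: "'f::field quat set" where
  "algB = {(a, b, 0, 0) | a b. True}"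

definition algQ :: "'f::field quat set" where
  "algQ = UNIV"

definition is_division :: "'f::field \<Rightarrow> 'f \<Rightarrow> 'f quat set \<Rightarrow> bool" where
  "is_division lam mu A \<longleftrightarrow>
     (\<forall>a\<in>A. a \<noteq> 0 \<longrightarrow> (\<exists>b\<in>A. qmul lam mu a b = qone \<and> qmul lam mu b a = qone))"

text \<open>n x n matrices over A, represented as functions nat => nat => quat,
  with entries zero outside {0..<n}.\<close>
type_synonym 'f qmat = "nat \<Rightarrow> nat \<Rightarrow> 'f quat"

definition mmul :: "'f::field \<Rightarrow> 'f \<Rightarrow> nat \<Rightarrow> 'f qmat \<Rightarrow> 'f qmat \<Rightarrow> 'f qmat" where
  "mmul lam mu n x y = (\<lambda>i j. if i < n \<and> j < n then (\<Sum>k<n. qmul lam mu (x i k) (y k j)) else 0)"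

definition madd :: "'f::field qmat \<Rightarrow> 'f qmat \<Rightarrow> 'f qmat" where
  "madd x y = (\<lambda>i j. x i j + y i j)"

definition msub :: "'f::field qmat \<Rightarrow> 'f qmat \<Rightarrow> 'f qmat" where
  "msub x y = (\<lambda>i j. x i j - y i j)"

definition mscale :: "'f::field \<Rightarrow> 'f qmat \<Rightarrow> 'f qmat" where
  "mscale c x = (\<lambda>i j. qscale c (x i j))"

definition mid :: "nat \<Rightarrow> 'f::field qmat" where
  "mid n = (\<lambda>i j. if i = j \<and> i < n then qone else 0)"

definition Hmat :: "nat \<Rightarrow> 'f::field quat set \<Rightarrow> 'f qmat set" where
  "Hmat n A = {x. (\<forall>i j. (n \<le> i \<or> n \<le> j) \<longrightarrow> x i j = 0)
                \<and> (\<forall>i<n. \<forall>j<n. x i j \<in> A)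
                \<and> (\<forall>i j. x i j = qconj (x j i))}"

definition jprod :: "'f::field \<Rightarrow> 'f \<Rightarrow> nat \<Rightarrow> 'f qmat \<Rightarrow> 'f qmat \<Rightarrow> 'f qmat" where
  "jprod lam mu n x y = mscale (1/2) (madd (mmul lam mu n x y) (mmul lam mu n y x))"

definition is_symmetry :: "'f::field \<Rightarrow> 'f \<Rightarrow> nat \<Rightarrow> 'f quat set \<Rightarrow> 'f qmat \<Rightarrow> bool" where
  "is_symmetry lam mu n A s \<longleftrightarrow> s \<in> Hmat n A \<and> jprod lam mu n s s = mid n"

definition Umap :: "'f::field \<Rightarrow> 'f \<Rightarrow> nat \<Rightarrow> 'f qmat \<Rightarrow> 'f qmat \<Rightarrow> 'f qmat" where
  "Umap lam mu n s x = msub (mscale 2 (jprod lam mu n s (jprod lam mu n s x))) x"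

definition two_local_1_aut ::
  "'f::field \<Rightarrow> 'f \<Rightarrow> nat \<Rightarrow> 'f quat set \<Rightarrow> ('f qmat \<Rightarrow> 'f qmat) \<Rightarrow> bool" where
  "two_local_1_aut lam mu n A D \<longleftrightarrow>
     (\<forall>x\<in>Hmat n A. D x \<in> Hmat n A) \<and>
     (\<forall>x\<in>Hmat n A. \<forall>y\<in>Hmat n A. \<exists>s. is_symmetry lam mu n A s \<and>
         D x = Umap lam mu n s x \<and> D y = Umap lam mu n s y)"

definition jordan_automorphism ::
  "'f::field \<Rightarrow> 'f \<Rightarrow> nat \<Rightarrow> 'f quat set \<Rightarrow> ('f qmat \<Rightarrow> 'f qmat) \<Rightarrow> bool" where
  "jordan_automorphism lam mu n A D \<longleftrightarrow>
     bij_betw D (Hmat n A) (Hmat n A) \<and>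
     (\<forall>x\<in>Hmat n A. \<forall>y\<in>Hmat n A. D (madd x y) = madd (D x) (D y)) \<and>
     (\<forall>c. \<forall>x\<in>Hmat n A. D (mscale c x) = mscale c (D x)) \<and>
     (\<forall>x\<in>Hmat n A. \<forall>y\<in>Hmat n A. D (jprod lam mu n x y) = jprod lam mu n (D x) (D y))"

end

theory Submission
  imports Defs
begin

text \<open>A 2-local 1-automorphism \<open>D\<close> acts on any two given matrices \<open>x\<close>, \<open>y\<close> as one
  sandwich \<open>x \<mapsto> s x s\<close> with \<open>s\<^sup>2 = 1\<close>. Applied to the pair \<open>(x, D x)\<close> this gives
  \<open>D (D x) = x\<close>, applied to \<open>(x, x\<^sup>2)\<close> it gives \<open>D (x\<^sup>2) = (D x)\<^sup>2\<close>, and applied to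
  \<open>(x, y)\<close> it shows that \<open>D\<close> preserves the real trace form \<open>Re tr (x y)\<close>, which is
  nondegenerate on \<open>H\<^sub>n(A)\<close>. A bijection preserving a nondegenerate form is linear, and a
  linear map preserving squares preserves the Jordan product by polarization.\<close>

lemma quat_zero_eq: "(0::'f::field quat) = (0, 0, 0, 0)"
  by (simp add: zero_prod_def)

lemma qmul_assoc: "qmul l m (qmul l m x y) z = qmul l m x (qmul l m y z)"
  by (cases x rule: prod_cases4; cases y rule: prod_cases4; cases z rule: prod_cases4)
     (simp add: qmul_def algebra_simps)

lemma qmul_add_left: "qmul l m (x + y) z = qmul l m x z + qmul l m y z"
  by (cases x rule: prod_cases4; cases y rule: prod_cases4; cases z rule: prod_cases4)
     (simp add: qmul_def algebra_simps)

lemma qmul_add_right: "qmul l m z (x + y) = qmul l m z x + qmul l m z y"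
  by (cases x rule: prod_cases4; cases y rule: prod_cases4; cases z rule: prod_cases4)
     (simp add: qmul_def algebra_simps)

lemma qmul_diff_left: "qmul l m (x - y) z = qmul l m x z - qmul l m y z"
  by (cases x rule: prod_cases4; cases y rule: prod_cases4; cases z rule: prod_cases4)
     (simp add: qmul_def algebra_simps)

lemma qmul_zero_left [simp]: "qmul l m 0 z = 0"
  by (cases z rule: prod_cases4) (simp add: qmul_def quat_zero_eq)

lemma qmul_zero_right [simp]: "qmul l m z 0 = 0"
  by (cases z rule: prod_cases4) (simp add: qmul_def quat_zero_eq)

lemma qmul_qone_left [simp]: "qmul l m qone x = x"
  by (cases x rule: prod_cases4) (simp add: qmul_def qone_def)

lemma qmul_qone_right [simp]: "qmul l m x qone = x"
  by (cases x rule: prod_cases4) (simp add: qmul_def qone_def)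

lemma qmul_qscale_left: "qmul l m (qscale c x) y = qscale c (qmul l m x y)"
  by (cases x rule: prod_cases4; cases y rule: prod_cases4)
     (simp add: qmul_def qscale_def algebra_simps)

lemma qmul_qscale_right: "qmul l m x (qscale c y) = qscale c (qmul l m x y)"
  by (cases x rule: prod_cases4; cases y rule: prod_cases4)
     (simp add: qmul_def qscale_def algebra_simps)

lemma qmul_sum_left: "qmul l m (sum f S) z = (\<Sum>k\<in>S. qmul l m (f k) z)"
  using sum_comp_morphism[of "\<lambda>x. qmul l m x z" f S] by (simp add: qmul_add_left o_def)

lemma qmul_sum_right: "qmul l m z (sum f S) = (\<Sum>k\<in>S. qmul l m z (f k))"
  using sum_comp_morphism[of "\<lambda>x. qmul l m z x" f S] by (simp add: qmul_add_right o_def)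

lemma fst_qmul_commute: "fst (qmul l m x y) = fst (qmul l m y x)"
  by (cases x rule: prod_cases4; cases y rule: prod_cases4) (simp add: qmul_def algebra_simps)

lemma fst_qmul_qconj: "fst (qmul l m (qconj x) (qconj y)) = fst (qmul l m x y)"
  by (cases x rule: prod_cases4; cases y rule: prod_cases4) (simp add: qmul_def qconj_def)

lemma qconj_qmul: "qconj (qmul l m x y) = qmul l m (qconj y) (qconj x)"
  by (cases x rule: prod_cases4; cases y rule: prod_cases4) (simp add: qmul_def qconj_def algebra_simps)

lemma qconj_add: "qconj (x + y) = qconj x + qconj y"
  by (cases x rule: prod_cases4; cases y rule: prod_cases4) (simp add: qconj_def)

lemma qconj_diff: "qconj (x - y) = qconj x - qconj y"
  by (cases x rule: prod_cases4; cases y rule: prod_cases4) (simp add: qconj_def)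

lemma qconj_qscale: "qconj (qscale c x) = qscale c (qconj x)"
  by (cases x rule: prod_cases4) (simp add: qconj_def qscale_def)

lemma qconj_qconj [simp]: "qconj (qconj x) = x"
  by (cases x rule: prod_cases4) (simp add: qconj_def)

lemma qconj_zero [simp]: "qconj 0 = 0"
  by (simp add: qconj_def quat_zero_eq)

lemma qconj_qone [simp]: "qconj qone = qone"
  by (simp add: qconj_def qone_def)

lemma qconj_sum: "qconj (sum f S) = (\<Sum>k\<in>S. qconj (f k))"
  using sum_comp_morphism[of qconj f S] by (simp add: qconj_add o_def)

lemma qscale_add: "qscale c (x + y) = qscale c x + qscale c y"
  by (cases x rule: prod_cases4; cases y rule: prod_cases4) (simp add: qscale_def algebra_simps)

lemma qscale_zero [simp]: "qscale c 0 = 0"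
  by (simp add: qscale_def quat_zero_eq)

lemma qscale_sum: "qscale c (sum f S) = (\<Sum>k\<in>S. qscale c (f k))"
  using sum_comp_morphism[of "qscale c" f S] by (simp add: qscale_add o_def)

lemma qscale_qscale: "qscale c (qscale d x) = qscale (c * d) x"
  by (cases x rule: prod_cases4) (simp add: qscale_def)

lemma qscale_minus_one: "x + qscale (- 1) y = x - y"
  by (cases x rule: prod_cases4; cases y rule: prod_cases4) (simp add: qscale_def)

lemma qscale_one [simp]: "qscale 1 x = x"
  by (cases x rule: prod_cases4) (simp add: qscale_def)

lemma fst_qscale: "fst (qscale c x) = c * fst x"
  by (cases x rule: prod_cases4) (simp add: qscale_def)

definition zero_outside :: "nat \<Rightarrow> 'f::field qmat \<Rightarrow> bool" where
  "zero_outside n x \<longleftrightarrow> (\<forall>i j. n \<le> i \<or> n \<le> j \<longrightarrow> x i j = 0)"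

lemma zero_outside_mmul: "zero_outside n (mmul l m n x y)"
  by (simp add: zero_outside_def mmul_def)

lemma mmul_assoc: "mmul l m n (mmul l m n x y) z = mmul l m n x (mmul l m n y z)"
proof (intro ext)
  fix i j
  show "mmul l m n (mmul l m n x y) z i j = mmul l m n x (mmul l m n y z) i j"
  proof (cases "i < n \<and> j < n")
    case True
    have "mmul l m n (mmul l m n x y) z i j
        = (\<Sum>k<n. \<Sum>p<n. qmul l m (qmul l m (x i p) (y p k)) (z k j))"
      using True by (simp add: mmul_def qmul_sum_left)
    also have "\<dots> = (\<Sum>p<n. \<Sum>k<n. qmul l m (x i p) (qmul l m (y p k) (z k j)))"
      by (subst sum.swap) (simp add: qmul_assoc)
    also have "\<dots> = mmul l m n x (mmul l m n y z) i j"
      using True by (simp add: mmul_def qmul_sum_right)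
    finally show ?thesis .
  qed (auto simp: mmul_def)
qed

lemma mmul_madd_left: "mmul l m n (madd x y) z = madd (mmul l m n x z) (mmul l m n y z)"
  by (intro ext) (auto simp: mmul_def madd_def qmul_add_left sum.distrib)

lemma mmul_madd_right: "mmul l m n z (madd x y) = madd (mmul l m n z x) (mmul l m n z y)"
  by (intro ext) (auto simp: mmul_def madd_def qmul_add_right sum.distrib)

lemma mmul_mscale_left: "mmul l m n (mscale c x) z = mscale c (mmul l m n x z)"
  by (intro ext) (auto simp: mmul_def mscale_def qmul_qscale_left qscale_sum)

lemma mmul_mscale_right: "mmul l m n z (mscale c x) = mscale c (mmul l m n z x)"
  by (intro ext) (auto simp: mmul_def mscale_def qmul_qscale_right qscale_sum)

lemma mmul_mid_left:
  assumes "zero_outside n x"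
  shows "mmul l m n (mid n) x = x"
proof (intro ext)
  fix i j
  have "qmul l m (mid n i k) (x k j) = (if k = i \<and> i < n then x i j else 0)" for k
    by (simp add: mid_def)
  then show "mmul l m n (mid n) x i j = x i j"
    using assms by (auto simp: mmul_def zero_outside_def)
qed

lemma mmul_mid_right:
  assumes "zero_outside n x"
  shows "mmul l m n x (mid n) = x"
proof (intro ext)
  fix i j
  have "qmul l m (x i k) (mid n k j) = (if k = j \<and> j < n then x i j else 0)" for k
    by (simp add: mid_def)
  then show "mmul l m n x (mid n) i j = x i j"
    using assms by (auto simp: mmul_def zero_outside_def)
qed

lemma mmul_qconj:
  assumes "\<And>i j. x i j = qconj (x j i)" and "\<And>i j. y i j = qconj (y j i)"
  shows "qconj (mmul l m n x y j i) = mmul l m n y x i j"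
proof -
  have "qconj (qmul l m (x j k) (y k i)) = qmul l m (y i k) (x k j)" for k
    by (metis assms qconj_qmul)
  then show ?thesis by (auto simp: mmul_def qconj_sum)
qed

lemma half_double: "(2::'f::field) \<noteq> 0 \<Longrightarrow> qscale (1/2) (x + x) = (x::'f quat)"
  by (cases x rule: prod_cases4) (simp add: qscale_def field_simps)

lemma jprod_self: "(2::'f::field) \<noteq> 0 \<Longrightarrow> jprod l m n (x::'f qmat) x = mmul l m n x x"
  by (simp add: jprod_def mscale_def madd_def half_double)

lemma jprod_polarization:
  "jprod l m n x y = mscale (1/2)
     (msub (msub (mmul l m n (madd x y) (madd x y)) (mmul l m n x x)) (mmul l m n y y))"
  unfolding jprod_def mmul_madd_left mmul_madd_right
  by (intro ext) (simp add: madd_def msub_def algebra_simps)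

lemma symmetry_square:
  fixes s :: "'f::field qmat"
  shows "(2::'f) \<noteq> 0 \<Longrightarrow> is_symmetry l m n A s \<Longrightarrow> mmul l m n s s = mid n"
  by (simp add: is_symmetry_def flip: jprod_self)

definition sandwich :: "'f::field \<Rightarrow> 'f \<Rightarrow> nat \<Rightarrow> 'f qmat \<Rightarrow> 'f qmat \<Rightarrow> 'f qmat" where
  "sandwich l m n s x = mmul l m n s (mmul l m n x s)"

lemma Umap_eq_sandwich:
  fixes x :: "'f::field qmat"
  assumes two: "(2::'f) \<noteq> 0" and s: "mmul l m n s s = mid n" and x: "zero_outside n x"
  shows "Umap l m n s x = sandwich l m n s x"
proof -
  let ?sxs = "sandwich l m n s x"
  have "mmul l m n s (mmul l m n s x) = x"
    by (simp add: s x mmul_mid_left flip: mmul_assoc)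
  moreover have "mmul l m n (mmul l m n x s) s = x"
    by (simp add: s x mmul_mid_right mmul_assoc)
  ultimately have "jprod l m n s (jprod l m n s x) =
      mscale (1/2) (madd (mscale (1/2) (madd x ?sxs)) (mscale (1/2) (madd ?sxs x)))"
    unfolding jprod_def sandwich_def
    by (simp add: mmul_madd_left mmul_madd_right mmul_mscale_left mmul_mscale_right mmul_assoc)
  moreover have "qscale 2 (qscale (1/2) (qscale (1/2) (p + q) + qscale (1/2) (q + p))) - p = q"
    for p q :: "'f quat"
  proof -
    have "qscale (1/2) (p + q) + qscale (1/2) (q + p) = p + q"
      using half_double[OF two, of "p + q"] by (simp add: qscale_add add.commute)
    moreover have "qscale 2 (qscale (1/2) r) = r" for r :: "'f quat"
      using two by (simp add: qscale_qscale)
    ultimately show ?thesis by simp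
  qed
  ultimately show ?thesis
    by (simp add: Umap_def msub_def mscale_def madd_def)
qed

lemma sandwich_mmul:
  assumes "mmul l m n s s = mid n"
  shows "sandwich l m n s (mmul l m n x y) = mmul l m n (sandwich l m n s x) (sandwich l m n s y)"
  by (simp add: sandwich_def mmul_assoc assms mmul_mid_left zero_outside_mmul flip: mmul_assoc[of l m n s s])

lemma sandwich_sandwich:
  assumes "mmul l m n s s = mid n" and "zero_outside n x"
  shows "sandwich l m n s (sandwich l m n s x) = x"
  by (simp add: sandwich_def mmul_assoc assms mmul_mid_left mmul_mid_right flip: mmul_assoc[of l m n s s])

definition trace_form :: "'f::field \<Rightarrow> 'f \<Rightarrow> nat \<Rightarrow> 'f qmat \<Rightarrow> 'f qmat \<Rightarrow> 'f" where
  "trace_form l m n x y = fst (\<Sum>i<n. mmul l m n x y i i)"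

lemma trace_form_expand:
  "trace_form l m n x y = (\<Sum>i<n. \<Sum>k<n. fst (qmul l m (x i k) (y k i)))"
  by (simp add: trace_form_def mmul_def fst_sum)

lemma trace_form_commute: "trace_form l m n x y = trace_form l m n y x"
  unfolding trace_form_expand by (subst sum.swap) (simp add: fst_qmul_commute)

lemma trace_form_madd_left:
  "trace_form l m n (madd x y) z = trace_form l m n x z + trace_form l m n y z"
  unfolding trace_form_expand by (simp add: madd_def qmul_add_left sum.distrib)

lemma trace_form_madd_right:
  "trace_form l m n z (madd x y) = trace_form l m n z x + trace_form l m n z y"
  by (metis trace_form_commute trace_form_madd_left)

lemma trace_form_msub_left:
  "trace_form l m n (msub x y) z = trace_form l m n x z - trace_form l m n y z"
  unfolding trace_form_expand by (simp add: msub_def qmul_diff_left sum_subtractf)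

lemma trace_form_mscale_left: "trace_form l m n (mscale c x) z = c * trace_form l m n x z"
  unfolding trace_form_expand
  by (simp add: mscale_def qmul_qscale_left fst_qscale sum_distrib_left)

lemma trace_form_sandwich:
  assumes s: "mmul l m n s s = mid n"
  shows "trace_form l m n (sandwich l m n s x) (sandwich l m n s y) = trace_form l m n x y"
proof -
  let ?xy = "mmul l m n x y"
  have "trace_form l m n (sandwich l m n s x) (sandwich l m n s y) =
      trace_form l m n s (mmul l m n ?xy s)"
    by (simp only: trace_form_def sandwich_mmul[OF s, symmetric]) (simp only: sandwich_def)
  also have "\<dots> = trace_form l m n (mmul l m n ?xy s) s"
    by (rule trace_form_commute)
  also have "\<dots> = trace_form l m n x y"
    by (simp add: trace_form_def mmul_assoc[of l m n ?xy] s mmul_mid_right zero_outside_mmul)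
  finally show ?thesis .
qed

definition matrix_unit :: "nat \<Rightarrow> nat \<Rightarrow> 'f::field quat \<Rightarrow> 'f qmat" where
  "matrix_unit i j a = (\<lambda>k p. if k = i \<and> p = j then a else 0)"

lemma trace_form_matrix_unit:
  assumes "i < n" "j < n"
  shows "trace_form l m n z (matrix_unit i j a) = fst (qmul l m (z j i) a)"
proof -
  have "fst (qmul l m (z p k) (matrix_unit i j a k p)) =
      (if k = i then if p = j then fst (qmul l m (z j i) a) else 0 else 0)" for k p
    by (simp add: matrix_unit_def)
  then show ?thesis
    using assms by (simp add: trace_form_expand)
qed

definition star_subalgebra :: "'f::field \<Rightarrow> 'f \<Rightarrow> 'f quat set \<Rightarrow> bool" where
  "star_subalgebra l m A \<longleftrightarrow> 0 \<in> A \<and> qone \<in> A \<and>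
     (\<forall>p\<in>A. \<forall>q\<in>A. p + q \<in> A \<and> qmul l m p q \<in> A) \<and>
     (\<forall>c. \<forall>p\<in>A. qscale c p \<in> A) \<and> (\<forall>p\<in>A. qconj p \<in> A)"

definition real_part_nondegenerate :: "'f::field \<Rightarrow> 'f \<Rightarrow> 'f quat set \<Rightarrow> bool" where
  "real_part_nondegenerate l m A \<longleftrightarrow> (\<forall>p\<in>A. (\<forall>a\<in>A. fst (qmul l m p a) = 0) \<longrightarrow> p = 0)"

lemma star_subalgebra_standard:
  assumes "A = algF \<or> A = algB \<or> A = algQ"
  shows "star_subalgebra l m A"
  using assms
  by (auto simp: star_subalgebra_def algF_def algB_def algQ_def quat_zero_eq qone_def
                 qmul_def qscale_def qconj_def)

lemma real_part_nondegenerate_standard: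
  assumes A: "A = algF \<or> A = algB \<or> A = algQ" and "l \<noteq> 0" "m \<noteq> 0"
  shows "real_part_nondegenerate l m A"
  unfolding real_part_nondegenerate_def
proof (intro ballI impI)
  fix p assume "p \<in> A" and orth: "\<forall>a\<in>A. fst (qmul l m p a) = 0"
  obtain p0 p1 p2 p3 where p: "p = (p0, p1, p2, p3)"
    by (cases p rule: prod_cases4)
  have "(1, 0, 0, 0) \<in> A"
    using A by (auto simp: algF_def algB_def algQ_def)
  then have "p0 = 0"
    using orth by (auto simp: p qmul_def)
  moreover have "p1 = 0"
  proof (cases "A = algF")
    case False
    then have "(0, 1, 0, 0) \<in> A"
      using A by (auto simp: algB_def algQ_def)
    then show ?thesis
      using orth \<open>l \<noteq> 0\<close> by (auto simp: p qmul_def)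
  qed (use \<open>p \<in> A\<close> in \<open>simp add: p algF_def\<close>)
  moreover have "p2 = 0 \<and> p3 = 0"
  proof (cases "A = algQ")
    case True
    then have "fst (qmul l m p (0, 0, 1, 0)) = 0" "fst (qmul l m p (0, 0, 0, 1)) = 0"
      using orth by (auto simp: algQ_def)
    then show ?thesis
      using \<open>l \<noteq> 0\<close> \<open>m \<noteq> 0\<close> by (simp add: p qmul_def)
  qed (use A \<open>p \<in> A\<close> in \<open>auto simp: p algF_def algB_def\<close>)
  ultimately show "p = 0"
    by (simp add: p quat_zero_eq)
qed

lemma star_subalgebra_sum:
  assumes "star_subalgebra l m A" and "\<And>k. k \<in> S \<Longrightarrow> f k \<in> A"
  shows "sum f S \<in> A"
  using assms(2)
  by (induction S rule: infinite_finite_induct) (use assms(1) in \<open>auto simp: star_subalgebra_def\<close>)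

lemma star_subalgebra_diff:
  assumes "star_subalgebra l m A" and "p \<in> A" "q \<in> A"
  shows "p - q \<in> A"
  using assms qscale_minus_one[of p q] unfolding star_subalgebra_def by metis

lemma HmatI:
  assumes "\<And>i j. n \<le> i \<or> n \<le> j \<Longrightarrow> x i j = 0"
    and "\<And>i j. i < n \<Longrightarrow> j < n \<Longrightarrow> x i j \<in> A"
    and "\<And>i j. x i j = qconj (x j i)"
  shows "x \<in> Hmat n A"
  unfolding Hmat_def using assms by blast

lemma Hmat_zero_outside: "x \<in> Hmat n A \<Longrightarrow> zero_outside n x"
  unfolding Hmat_def zero_outside_def by blast

lemma Hmat_entry: "x \<in> Hmat n A \<Longrightarrow> i < n \<Longrightarrow> j < n \<Longrightarrow> x i j \<in> A"
  unfolding Hmat_def by blast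

lemma Hmat_qconj: "x \<in> Hmat n A \<Longrightarrow> x i j = qconj (x j i)"
  unfolding Hmat_def by blast

lemma Hmat_outside: "x \<in> Hmat n A \<Longrightarrow> n \<le> i \<or> n \<le> j \<Longrightarrow> x i j = 0"
  unfolding Hmat_def by blast

lemma Hmat_entrywise:
  assumes x: "x \<in> Hmat n A" and y: "y \<in> Hmat n A" and "f 0 0 = 0"
    and "\<And>p q. p \<in> A \<Longrightarrow> q \<in> A \<Longrightarrow> f p q \<in> A"
    and "\<And>p q. qconj (f p q) = f (qconj p) (qconj q)"
  shows "(\<lambda>i j. f (x i j) (y i j)) \<in> Hmat n A"
proof (rule HmatI)
  fix i j
  show "n \<le> i \<or> n \<le> j \<Longrightarrow> f (x i j) (y i j) = 0"
    using assms(3) Hmat_outside[OF x] Hmat_outside[OF y] by simp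
  show "i < n \<Longrightarrow> j < n \<Longrightarrow> f (x i j) (y i j) \<in> A"
    using assms(4) Hmat_entry[OF x] Hmat_entry[OF y] by simp
  show "f (x i j) (y i j) = qconj (f (x j i) (y j i))"
    using assms(5) by (simp flip: Hmat_qconj[OF x] Hmat_qconj[OF y])
qed

context
  fixes l m :: "'f::field" and A :: "'f quat set"
  assumes star: "star_subalgebra l m A"
begin

lemma Hmat_madd: "x \<in> Hmat n A \<Longrightarrow> y \<in> Hmat n A \<Longrightarrow> madd x y \<in> Hmat n A"
  using Hmat_entrywise[of x n A y "(+)"] star by (simp add: madd_def star_subalgebra_def qconj_add)

lemma Hmat_msub: "x \<in> Hmat n A \<Longrightarrow> y \<in> Hmat n A \<Longrightarrow> msub x y \<in> Hmat n A"
  using Hmat_entrywise[of x n A y "(-)"] star by (simp add: msub_def star_subalgebra_diff qconj_diff)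

lemma Hmat_mscale: "x \<in> Hmat n A \<Longrightarrow> mscale c x \<in> Hmat n A"
  using Hmat_entrywise[of x n A x "\<lambda>p q. qscale c p"] star
  by (simp add: mscale_def star_subalgebra_def qconj_qscale)

lemma Hmat_jprod:
  assumes x: "x \<in> Hmat n A" and y: "y \<in> Hmat n A"
  shows "jprod l m n x y \<in> Hmat n A"
proof -
  have entry: "mmul l m n u v i j \<in> A"
    if "u \<in> Hmat n A" "v \<in> Hmat n A" "i < n" "j < n" for u v i j
    using that star unfolding mmul_def
    by (auto intro!: star_subalgebra_sum[OF star] simp: star_subalgebra_def Hmat_entry)
  have conj: "qconj (mmul l m n u v j i) = mmul l m n v u i j"
    if "u \<in> Hmat n A" "v \<in> Hmat n A" for u v i j
    using that by (intro mmul_qconj) (auto intro: Hmat_qconj)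
  show ?thesis
    unfolding jprod_def mscale_def madd_def
  proof (rule HmatI)
    fix i j
    show "n \<le> i \<or> n \<le> j \<Longrightarrow> qscale (1/2) (mmul l m n x y i j + mmul l m n y x i j) = 0"
      by (auto simp: mmul_def)
    show "i < n \<Longrightarrow> j < n \<Longrightarrow> qscale (1/2) (mmul l m n x y i j + mmul l m n y x i j) \<in> A"
      using star entry x y unfolding star_subalgebra_def by blast
    show "qscale (1/2) (mmul l m n x y i j + mmul l m n y x i j) =
        qconj (qscale (1/2) (mmul l m n x y j i + mmul l m n y x j i))"
      using conj[OF x y, of j i] conj[OF y x, of j i] by (simp add: qconj_qscale qconj_add add.commute)
  qed
qed

lemma Hmat_mmul_self: "(2::'f) \<noteq> 0 \<Longrightarrow> x \<in> Hmat n A \<Longrightarrow> mmul l m n x x \<in> Hmat n A"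
  using Hmat_jprod jprod_self by metis

lemma Hmat_trace_form_nondegenerate:
  assumes two: "(2::'f) \<noteq> 0" and nondeg: "real_part_nondegenerate l m A"
    and z: "z \<in> Hmat n A" and orth: "\<forall>w\<in>Hmat n A. trace_form l m n z w = 0"
  shows "z = (\<lambda>i j. 0)"
proof (intro ext)
  fix i j
  show "z i j = 0"
  proof (cases "i < n \<and> j < n")
    case False
    then show ?thesis using z Hmat_outside by (metis not_le)
  next
    case True
    then have ij: "i < n" "j < n" by auto
    show ?thesis
    proof (cases "i = j")
      case True
      have "matrix_unit i i qone \<in> Hmat n A"
        using star ij by (intro HmatI) (auto simp: matrix_unit_def star_subalgebra_def)
      then have "fst (z i i) = 0"
        using orth trace_form_matrix_unit[OF ij(1) ij(1), of l m z qone] by simp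
      moreover have "z i i = qconj (z i i)"
        using z by (rule Hmat_qconj)
      ultimately show ?thesis
        using two unfolding True by (cases "z j j" rule: prod_cases4) (auto simp: qconj_def quat_zero_eq)
    next
      case False
      have "fst (qmul l m (z i j) a) = 0" if a: "a \<in> A" for a
      proof -
        let ?w = "madd (matrix_unit j i a) (matrix_unit i j (qconj a))"
        have "?w \<in> Hmat n A"
          using star ij False a by (intro HmatI) (auto simp: matrix_unit_def madd_def star_subalgebra_def)
        moreover have "trace_form l m n z ?w = 2 * fst (qmul l m (z i j) a)"
          using fst_qmul_qconj[of l m "z i j" a] Hmat_qconj[OF z, of j i]
          by (simp add: trace_form_madd_right trace_form_matrix_unit ij)
        ultimately show ?thesis
          using orth two by simp
      qed
      then show ?thesis
        using nondeg Hmat_entry[OF z ij] unfolding real_part_nondegenerate_def by blast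
    qed
  qed
qed

lemma Hmat_eq_by_trace_form:
  assumes two: "(2::'f) \<noteq> 0" and nondeg: "real_part_nondegenerate l m A"
    and x: "x \<in> Hmat n A" and y: "y \<in> Hmat n A"
    and eq: "\<And>w. w \<in> Hmat n A \<Longrightarrow> trace_form l m n x w = trace_form l m n y w"
  shows "x = y"
proof -
  have "\<forall>w\<in>Hmat n A. trace_form l m n (msub x y) w = 0"
    using eq by (simp add: trace_form_msub_left)
  then have "msub x y = (\<lambda>i j. 0)"
    by (rule Hmat_trace_form_nondegenerate[OF two nondeg Hmat_msub[OF x y]])
  then show ?thesis
    by (intro ext) (simp add: msub_def fun_eq_iff)
qed

end

locale two_local_1_aut_star =
  fixes l m :: "'f::field" and n :: nat and A :: "'f quat set" and D :: "'f qmat \<Rightarrow> 'f qmat"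
  assumes two: "(2::'f) \<noteq> 0"
    and star_subalgebra: "star_subalgebra l m A"
    and nondegenerate: "real_part_nondegenerate l m A"
    and two_local: "two_local_1_aut l m n A D"
begin

lemma maps_Hmat: "x \<in> Hmat n A \<Longrightarrow> D x \<in> Hmat n A"
  using two_local unfolding two_local_1_aut_def by blast

lemma two_local_sandwich:
  assumes x: "x \<in> Hmat n A" and y: "y \<in> Hmat n A"
  obtains s where "mmul l m n s s = mid n" "D x = sandwich l m n s x" "D y = sandwich l m n s y"
proof -
  obtain s where s: "is_symmetry l m n A s" "D x = Umap l m n s x" "D y = Umap l m n s y"
    using two_local x y unfolding two_local_1_aut_def by blast
  have ss: "mmul l m n s s = mid n"
    using symmetry_square[OF two s(1)] .
  have "D x = sandwich l m n s x" "D y = sandwich l m n s y"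
    using s(2,3) Umap_eq_sandwich[OF two ss] Hmat_zero_outside[OF x] Hmat_zero_outside[OF y]
    by simp_all
  with ss show thesis by (rule that)
qed

lemma involutive:
  assumes x: "x \<in> Hmat n A"
  shows "D (D x) = x"
proof -
  obtain s where s: "mmul l m n s s = mid n" "D x = sandwich l m n s x"
      "D (D x) = sandwich l m n s (D x)"
    using two_local_sandwich[OF x maps_Hmat[OF x]] .
  then show ?thesis
    using sandwich_sandwich[OF s(1) Hmat_zero_outside[OF x]] by simp
qed

lemma preserves_trace_form:
  assumes x: "x \<in> Hmat n A" and y: "y \<in> Hmat n A"
  shows "trace_form l m n (D x) (D y) = trace_form l m n x y"
proof -
  obtain s where s: "mmul l m n s s = mid n" "D x = sandwich l m n s x" "D y = sandwich l m n s y"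
    using two_local_sandwich[OF x y] .
  then show ?thesis
    using trace_form_sandwich[OF s(1)] by simp
qed

lemma preserves_square:
  assumes x: "x \<in> Hmat n A"
  shows "D (mmul l m n x x) = mmul l m n (D x) (D x)"
proof -
  obtain s where s: "mmul l m n s s = mid n" "D x = sandwich l m n s x"
      "D (mmul l m n x x) = sandwich l m n s (mmul l m n x x)"
    using two_local_sandwich[OF x Hmat_mmul_self[OF star_subalgebra two x]] .
  then show ?thesis
    using sandwich_mmul[OF s(1)] by simp
qed

lemma eq_by_trace_form_preservation:
  assumes u: "u \<in> Hmat n A" and v: "v \<in> Hmat n A"
    and eq: "\<And>w. w \<in> Hmat n A \<Longrightarrow> trace_form l m n u (D w) = trace_form l m n v (D w)"
  shows "u = v"
proof (rule Hmat_eq_by_trace_form[OF star_subalgebra two nondegenerate u v])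
  fix w
  assume w: "w \<in> Hmat n A"
  then show "trace_form l m n u w = trace_form l m n v w"
    using eq[OF maps_Hmat[OF w]] involutive[OF w] by simp
qed

lemma preserves_madd:
  assumes x: "x \<in> Hmat n A" and y: "y \<in> Hmat n A"
  shows "D (madd x y) = madd (D x) (D y)"
  by (rule eq_by_trace_form_preservation)
     (simp_all add: Hmat_madd[OF star_subalgebra] maps_Hmat x y trace_form_madd_left
        preserves_trace_form)

lemma preserves_msub:
  assumes x: "x \<in> Hmat n A" and y: "y \<in> Hmat n A"
  shows "D (msub x y) = msub (D x) (D y)"
  by (rule eq_by_trace_form_preservation)
     (simp_all add: Hmat_msub[OF star_subalgebra] maps_Hmat x y trace_form_msub_left
        preserves_trace_form)

lemma preserves_mscale:
  assumes x: "x \<in> Hmat n A"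
  shows "D (mscale c x) = mscale c (D x)"
  by (rule eq_by_trace_form_preservation)
     (simp_all add: Hmat_mscale[OF star_subalgebra] maps_Hmat x trace_form_mscale_left
        preserves_trace_form)

lemma preserves_jprod:
  assumes x: "x \<in> Hmat n A" and y: "y \<in> Hmat n A"
  shows "D (jprod l m n x y) = jprod l m n (D x) (D y)"
proof -
  have sq: "mmul l m n u u \<in> Hmat n A" if "u \<in> Hmat n A" for u
    using Hmat_mmul_self[OF star_subalgebra two that] .
  have xy: "madd x y \<in> Hmat n A"
    using Hmat_madd[OF star_subalgebra x y] .
  have "D (jprod l m n x y) = mscale (1/2) (msub (msub (D (mmul l m n (madd x y) (madd x y)))
      (D (mmul l m n x x))) (D (mmul l m n y y)))"
    unfolding jprod_polarization[of l m n x y]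
    by (simp add: preserves_mscale preserves_msub Hmat_msub[OF star_subalgebra] sq x y xy)
  also have "\<dots> = jprod l m n (D x) (D y)"
    by (simp add: jprod_polarization preserves_square preserves_madd x y xy)
  finally show ?thesis .
qed

lemma is_jordan_automorphism: "jordan_automorphism l m n A D"
proof -
  have "bij_betw D (Hmat n A) (Hmat n A)"
    by (rule bij_betw_byWitness[where f' = D]) (auto simp: involutive maps_Hmat)
  then show ?thesis
    unfolding jordan_automorphism_def
    by (simp add: preserves_madd preserves_mscale preserves_jprod)
qed

end

theorem theorem4p7:
  fixes lam mu :: "'f::field" and n :: nat and A :: "'f quat set"
    and D :: "'f qmat \<Rightarrow> 'f qmat"
  assumes char: "(2::'f) \<noteq> 0"
    and n: "3 \<le> n"
    and params: "lam \<noteq> 0" "mu \<noteq> 0"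
    and A: "A = algF \<or> A = algB \<or> A = algQ"
    and div: "is_division lam mu A"
    and D: "two_local_1_aut lam mu n A D"
  shows "jordan_automorphism lam mu n A D"
proof -
  interpret two_local_1_aut_star lam mu n A D
    using char D star_subalgebra_standard[OF A] real_part_nondegenerate_standard[OF A params]
    by unfold_locales
  show ?thesis
    by (rule is_jordan_automorphism)
qed

end
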